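(* Let $\Gamma_i$ be a graph of maximum degree $\Delta_i$, $i\in\{1,2\}$, and let $k_1,k_2$ be integers. Then for every integer $k\le\min\{k_1-\Delta_2,k_2-\Delta_1\}$, $a_k^o(\Gamma_1\times\Gamma_2)\le a_{k_1}^o(\Gamma_1)\,a_{k_2}^o(\Gamma_2)$.
   Context: Graphs are finite and simple. In a graph $G=(V,E)$, for $S\subseteq V$ and $v\in V$, $\delta_S(v)$ is the number of neighbours of $v$ in $S$, $\overline{S}=V\setminus S$, and $\partial(S)$ the set of vertices of $\overline{S}$ with a neighbour in $S$. A nonempty $S\subseteq V$ is an offensive $k$-alliance in $G$ if $\delta_S(v)\ge\delta_{\overline{S}}(v)+k$ for every $v\in\partial(S)$; $a_k^o(G)$ denotes the minimum cardinality of an offensive $k$-alliance in $G$. The Cartesian product $\Gamma_1\times\Gamma_2$ has vertex set $V_1\times V_2$, with $(u,v)\sim(u',v')$ iff either $u=u'$ and $v\sim v'$, or $v=v'$ and $u\sim u'$. *)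

theory Defs
  imports Main
begin

definition graph :: "'a set \<Rightarrow> ('a \<Rightarrow> 'a \<Rightarrow> bool) \<Rightarrow> bool" where
  "graph V E \<longleftrightarrow> finite V \<and> (\<forall>u v. E u v \<longrightarrow> u \<in> V \<and> v \<in> V)
     \<and> (\<forall>u v. E u v \<longrightarrow> E v u) \<and> (\<forall>u. \<not> E u u)"

definition nbr_count :: "('a \<Rightarrow> 'a \<Rightarrow> bool) \<Rightarrow> 'a set \<Rightarrow> 'a \<Rightarrow> nat" where
  "nbr_count E S v = card {u \<in> S. E v u}"

definition degree :: "'a set \<Rightarrow> ('a \<Rightarrow> 'a \<Rightarrow> bool) \<Rightarrow> 'a \<Rightarrow> nat" where
  "degree V E v = nbr_count E V v"

definition max_degree :: "'a set \<Rightarrow> ('a \<Rightarrow> 'a \<Rightarrow> bool) \<Rightarrow> nat" where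
  "max_degree V E = Max (degree V E ` V)"

definition boundary :: "'a set \<Rightarrow> ('a \<Rightarrow> 'a \<Rightarrow> bool) \<Rightarrow> 'a set \<Rightarrow> 'a set" where
  "boundary V E S = {v \<in> V - S. \<exists>u \<in> S. E v u}"

definition offensive_alliance :: "'a set \<Rightarrow> ('a \<Rightarrow> 'a \<Rightarrow> bool) \<Rightarrow> int \<Rightarrow> 'a set \<Rightarrow> bool" where
  "offensive_alliance V E k S \<longleftrightarrow> S \<subseteq> V \<and> S \<noteq> {} \<and>
     (\<forall>v \<in> boundary V E S. int (nbr_count E S v) \<ge> int (nbr_count E (V - S) v) + k)"

definition offensive_alliance_number :: "'a set \<Rightarrow> ('a \<Rightarrow> 'a \<Rightarrow> bool) \<Rightarrow> int \<Rightarrow> nat" where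
  "offensive_alliance_number V E k = Min (card ` {S. offensive_alliance V E k S})"

definition cart_edge :: "('a \<Rightarrow> 'a \<Rightarrow> bool) \<Rightarrow> ('b \<Rightarrow> 'b \<Rightarrow> bool) \<Rightarrow> 'a \<times> 'b \<Rightarrow> 'a \<times> 'b \<Rightarrow> bool" where
  "cart_edge E1 E2 = (\<lambda>(u, v) (u', v'). (u = u' \<and> E2 v v') \<or> (v = v' \<and> E1 u u'))"

end

theory Submission
  imports Defs
begin

text \<open>If \<open>S\<^sub>1\<close> and \<open>S\<^sub>2\<close> are offensive alliances, so is \<open>S\<^sub>1 \<times> S\<^sub>2\<close>. A boundary
  vertex \<open>(u, v)\<close> of \<open>S\<^sub>1 \<times> S\<^sub>2\<close> has, say, \<open>u \<in> S\<^sub>1\<close> and \<open>v\<close> on the boundary of \<open>S\<^sub>2\<close>.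
  Its neighbours inside \<open>S\<^sub>1 \<times> S\<^sub>2\<close> are exactly the \<open>(u, y)\<close> with \<open>y \<in> S\<^sub>2\<close>, while its
  neighbours outside are the \<open>(u, y)\<close> with \<open>y \<notin> S\<^sub>2\<close> plus at most \<open>\<Delta>\<^sub>1\<close> vertices \<open>(x, v)\<close>.
  So the alliance inequality for \<open>v\<close> in \<open>\<Gamma>\<^sub>2\<close> transfers with the loss \<open>\<Delta>\<^sub>1\<close>.
  The other case is symmetric, and \<open>|S\<^sub>1 \<times> S\<^sub>2| = |S\<^sub>1| |S\<^sub>2|\<close>.\<close>

lemma degree_le_max_degree:
  assumes "graph V E" "u \<in> V"
  shows "degree V E u \<le> max_degree V E"
  using assms unfolding max_degree_def graph_def by auto

lemma nbr_count_cart_edge_swap: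
  "nbr_count (cart_edge E1 E2) A (u, v) = nbr_count (cart_edge E2 E1) (prod.swap ` A) (v, u)"
proof -
  have "{w \<in> prod.swap ` A. cart_edge E2 E1 (v, u) w}
      = prod.swap ` {w \<in> A. cart_edge E1 E2 (u, v) w}"
    by (auto simp: cart_edge_def)
  then show ?thesis
    unfolding nbr_count_def by (simp add: card_image)
qed

lemma cart_edge_alliance_inequality:
  assumes g1: "graph V1 E1" and fin2: "finite V2"
    and u: "u \<in> S1" "S1 \<subseteq> V1"
    and alliance2: "int (nbr_count E2 S2 v) \<ge> int (nbr_count E2 (V2 - S2) v) + k2"
    and v: "v \<notin> S2"
    and k: "k + int (max_degree V1 E1) \<le> k2"
  shows "int (nbr_count (cart_edge E1 E2) (S1 \<times> S2) (u, v))
         \<ge> int (nbr_count (cart_edge E1 E2) (V1 \<times> V2 - S1 \<times> S2) (u, v)) + k"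
proof -
  have fin1: "finite V1" using g1 by (simp add: graph_def)
  have "{w \<in> S1 \<times> S2. cart_edge E1 E2 (u, v) w} = Pair u ` {y \<in> S2. E2 v y}"
    using u v by (auto simp: cart_edge_def)
  then have inside: "nbr_count (cart_edge E1 E2) (S1 \<times> S2) (u, v) = nbr_count E2 S2 v"
    unfolding nbr_count_def by (simp add: card_image inj_on_def)
  have "{w \<in> V1 \<times> V2 - S1 \<times> S2. cart_edge E1 E2 (u, v) w}
     \<subseteq> Pair u ` {y \<in> V2 - S2. E2 v y} \<union> (\<lambda>x. (x, v)) ` {x \<in> V1. E1 u x}"
    using u by (auto simp: cart_edge_def)
  then have "nbr_count (cart_edge E1 E2) (V1 \<times> V2 - S1 \<times> S2) (u, v)
     \<le> card (Pair u ` {y \<in> V2 - S2. E2 v y} \<union> (\<lambda>x. (x, v)) ` {x \<in> V1. E1 u x})"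
    unfolding nbr_count_def by (rule card_mono[rotated]) (use fin1 fin2 in auto)
  also have "\<dots> \<le> card (Pair u ` {y \<in> V2 - S2. E2 v y}) + card ((\<lambda>x. (x, v)) ` {x \<in> V1. E1 u x})"
    by (rule card_Un_le)
  also have "\<dots> \<le> nbr_count E2 (V2 - S2) v + degree V1 E1 u"
    unfolding nbr_count_def degree_def by (intro add_mono card_image_le) (use fin1 fin2 in auto)
  also have "\<dots> \<le> nbr_count E2 (V2 - S2) v + max_degree V1 E1"
    using degree_le_max_degree[OF g1] u by auto
  finally show ?thesis using alliance2 inside k by linarith
qed

lemma offensive_alliance_cart_product:
  assumes g1: "graph V1 E1" and g2: "graph V2 E2"
    and a1: "offensive_alliance V1 E1 k1 S1" and a2: "offensive_alliance V2 E2 k2 S2"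
    and k: "k \<le> min (k1 - int (max_degree V2 E2)) (k2 - int (max_degree V1 E1))"
  shows "offensive_alliance (V1 \<times> V2) (cart_edge E1 E2) k (S1 \<times> S2)"
  unfolding offensive_alliance_def
proof (intro conjI ballI)
  have S1: "S1 \<subseteq> V1" "S1 \<noteq> {}" and S2: "S2 \<subseteq> V2" "S2 \<noteq> {}"
    using a1 a2 by (auto simp: offensive_alliance_def)
  then show "S1 \<times> S2 \<subseteq> V1 \<times> V2" "S1 \<times> S2 \<noteq> {}" by auto
  have fin1: "finite V1" and fin2: "finite V2" using g1 g2 by (auto simp: graph_def)
  fix w assume w: "w \<in> boundary (V1 \<times> V2) (cart_edge E1 E2) (S1 \<times> S2)"
  obtain u v where uv: "w = (u, v)" by force
  from w have uV: "u \<in> V1" and vV: "v \<in> V2" and out: "(u, v) \<notin> S1 \<times> S2"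
    and nbr: "\<exists>x \<in> S1 \<times> S2. cart_edge E1 E2 (u, v) x"
    by (auto simp: boundary_def uv)
  show "int (nbr_count (cart_edge E1 E2) (S1 \<times> S2) w)
        \<ge> int (nbr_count (cart_edge E1 E2) (V1 \<times> V2 - S1 \<times> S2) w) + k"
  proof (cases "u \<in> S1")
    case True
    with out nbr have "v \<in> boundary V2 E2 S2"
      using vV by (auto simp: boundary_def cart_edge_def)
    then have "int (nbr_count E2 S2 v) \<ge> int (nbr_count E2 (V2 - S2) v) + k2"
      using a2 by (simp add: offensive_alliance_def)
    with True out show ?thesis
      unfolding uv using cart_edge_alliance_inequality[OF g1 fin2 True S1(1)] k by auto
  next
    case False
    with nbr have "v \<in> S2" "u \<in> boundary V1 E1 S1"
      using uV by (auto simp: boundary_def cart_edge_def)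
    moreover from this have "int (nbr_count E1 S1 u) \<ge> int (nbr_count E1 (V1 - S1) u) + k1"
      using a1 by (simp add: offensive_alliance_def)
    ultimately have "int (nbr_count (cart_edge E2 E1) (S2 \<times> S1) (v, u))
        \<ge> int (nbr_count (cart_edge E2 E1) (V2 \<times> V1 - S2 \<times> S1) (v, u)) + k"
      using cart_edge_alliance_inequality[OF g2 fin1 _ S2(1)] False k by auto
    moreover have "prod.swap ` (V1 \<times> V2 - S1 \<times> S2) = V2 \<times> V1 - S2 \<times> S1"
      by (simp add: image_set_diff product_swap)
    ultimately show ?thesis
      unfolding uv by (simp add: nbr_count_cart_edge_swap[of E1 E2] product_swap)
  qed
qed

lemma offensive_alliance_number_attained:
  assumes "graph V E" "V \<noteq> {}"
  obtains S where "offensive_alliance V E k S" "card S = offensive_alliance_number V E k"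
proof -
  have "finite (card ` {S. offensive_alliance V E k S})"
    using assms by (auto simp: graph_def offensive_alliance_def)
  moreover have "offensive_alliance V E k V"
    using assms by (auto simp: offensive_alliance_def boundary_def)
  ultimately have "offensive_alliance_number V E k \<in> card ` {S. offensive_alliance V E k S}"
    unfolding offensive_alliance_number_def by (intro Min_in) auto
  then obtain S where "offensive_alliance V E k S" "offensive_alliance_number V E k = card S"
    by auto
  with that show ?thesis by simp
qed

lemma offensive_alliance_number_le:
  assumes "finite V" "offensive_alliance V E k S"
  shows "offensive_alliance_number V E k \<le> card S"
proof -
  have "finite (card ` {S. offensive_alliance V E k S})"
    using assms by (auto simp: offensive_alliance_def)
  then show ?thesis
    unfolding offensive_alliance_number_def using assms(2) by (intro Min_le) auto
qed

theorem mainTheorem12: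
  fixes V1 :: "'a set" and E1 :: "'a \<Rightarrow> 'a \<Rightarrow> bool"
    and V2 :: "'b set" and E2 :: "'b \<Rightarrow> 'b \<Rightarrow> bool"
    and k k1 k2 :: int
  assumes "graph V1 E1" and "V1 \<noteq> {}"
    and "graph V2 E2" and "V2 \<noteq> {}"
    and "k \<le> min (k1 - int (max_degree V2 E2)) (k2 - int (max_degree V1 E1))"
  shows "offensive_alliance_number (V1 \<times> V2) (cart_edge E1 E2) k
           \<le> offensive_alliance_number V1 E1 k1 * offensive_alliance_number V2 E2 k2"
proof -
  obtain S1 where a1: "offensive_alliance V1 E1 k1 S1"
    and c1: "card S1 = offensive_alliance_number V1 E1 k1"
    using offensive_alliance_number_attained[OF assms(1,2)] .
  obtain S2 where a2: "offensive_alliance V2 E2 k2 S2"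
    and c2: "card S2 = offensive_alliance_number V2 E2 k2"
    using offensive_alliance_number_attained[OF assms(3,4)] .
  have "finite (V1 \<times> V2)"
    using assms(1,3) by (simp add: graph_def)
  from offensive_alliance_number_le[OF this offensive_alliance_cart_product[OF assms(1,3) a1 a2 assms(5)]]
  show ?thesis
    using c1 c2 by (simp add: card_cartesian_product)
qed

end
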